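(* Let $d\ge 3$, let $\Delta$ be a shellable simplicial $(d-1)$-sphere with facet-ridge graph $G$, let $\mathcal{O}$ be a good acyclic orientation of $G$, and let $0\le k\le d$. Then the map sending a $k$-frame $\langle t,t^1,\dots,t^k\rangle$ to the face $T\cap T^1\cap\cdots\cap T^k$ restricts to a bijection between the set of $k$-frames of $G$ whose root has indegree $k$ in the $k$-frame (i.e., all $k$ edges of the frame are directed towards the root under $\mathcal{O}$) and the set of $(d-k-1)$-dimensional faces of $\Delta$.
   Context: $\Delta$ is a simplicial complex homeomorphic to the $(d-1)$-sphere; facets have $d$ elements, ridges $d-1$. Shellable: there is an ordering $T_1,\dots,T_n$ of the facets with $\overline{T}_i\cap(\overline{T}_1\cup\cdots\cup\overline{T}_{i-1})$ pure $(d-2)$-dimensional for $i\ge2$ ($\overline{T}$ = all subsets of $T$). The facet-ridge graph $G$ has facets as vertices, adjacent iff they share a ridge; vertex $t$ corresponds to facet $T$. For $0\le k\le d$ and a face $\sigma$ with $|\sigma|=d-k$, $\mathcal{V}^\Delta_k(\sigma)$ is the set of vertices of $G$ corresponding to facets containing $\sigma$. An orientation of $G$ is good if for every such $k$ and $\sigma$ the induced orientation on $G[\mathcal{V}^\Delta_k(\sigma)]$ has exactly one sink; acyclic means no directed cycle. A $k$-frame of $G$ is a (not necessarily induced) subgraph isomorphic to $K_{1,k}$; its vertex of degree $k$ is the root; $\langle t,t^1,\dots,t^k\rangle$ denotes the $k$-frame with root $t$ and other vertices $t^1,\dots,t^k$ (a $0$-frame is a single vertex). *)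

theory Defs
  imports "HOL-Analysis.Analysis"
begin

definition simplicial_complex :: "'v::finite set set \<Rightarrow> bool" where
  "simplicial_complex \<Delta> \<longleftrightarrow> \<Delta> \<noteq> {} \<and> (\<forall>\<sigma>\<in>\<Delta>. \<forall>\<tau>. \<tau> \<subseteq> \<sigma> \<longrightarrow> \<tau> \<in> \<Delta>)"

definition geometric_realization :: "'v::finite set set \<Rightarrow> (real ^ 'v) set" where
  "geometric_realization \<Delta> = (\<Union>\<sigma>\<in>\<Delta>. convex hull ((\<lambda>v. axis v 1) ` \<sigma>))"

definition facets :: "'v set set \<Rightarrow> 'v set set" where
  "facets \<Delta> = {T \<in> \<Delta>. \<forall>T'\<in>\<Delta>. T \<subseteq> T' \<longrightarrow> T' = T}"

text \<open>A complex K is pure of dimension m-1: every face lies in a face with m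
  elements, and no face has more than m elements.\<close>
definition pure_card :: "nat \<Rightarrow> 'v set set \<Rightarrow> bool" where
  "pure_card m K \<longleftrightarrow> (\<forall>\<sigma>\<in>K. \<exists>\<tau>\<in>K. \<sigma> \<subseteq> \<tau> \<and> card \<tau> = m) \<and> (\<forall>\<tau>\<in>K. card \<tau> \<le> m)"

definition shellable :: "nat \<Rightarrow> 'v set set \<Rightarrow> bool" where
  "shellable d \<Delta> \<longleftrightarrow> (\<exists>Ts. distinct Ts \<and> set Ts = facets \<Delta> \<and>
     (\<forall>i. 1 \<le> i \<and> i < length Ts \<longrightarrow>
        pure_card (d - 1) (Pow (Ts ! i) \<inter> (\<Union>j<i. Pow (Ts ! j)))))"

text \<open>Facet-ridge graph: distinct facets sharing a ridge (a face with d-1 elements).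
  Vertices of the graph are identified with the facets themselves.\<close>
definition fr_adjacent :: "nat \<Rightarrow> 'v set set \<Rightarrow> 'v set \<Rightarrow> 'v set \<Rightarrow> bool" where
  "fr_adjacent d \<Delta> T T' \<longleftrightarrow> T \<in> facets \<Delta> \<and> T' \<in> facets \<Delta> \<and> T \<noteq> T' \<and>
     (\<exists>\<rho>. card \<rho> = d - 1 \<and> \<rho> \<subseteq> T \<and> \<rho> \<subseteq> T')"

text \<open>An orientation: a set of directed edges (a,b) meaning a \<rightarrow> b, containing exactly
  one direction of every edge of the facet-ridge graph and nothing else.\<close>
definition is_orientation :: "nat \<Rightarrow> 'v set set \<Rightarrow> ('v set \<times> 'v set) set \<Rightarrow> bool" where
  "is_orientation d \<Delta> Or \<longleftrightarrow> (\<forall>(a,b)\<in>Or. fr_adjacent d \<Delta> a b) \<and>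
     (\<forall>a b. fr_adjacent d \<Delta> a b \<longrightarrow> ((a,b) \<in> Or \<longleftrightarrow> (b,a) \<notin> Or))"

definition facets_containing :: "'v set set \<Rightarrow> 'v set \<Rightarrow> 'v set set" where
  "facets_containing \<Delta> \<sigma> = {T \<in> facets \<Delta>. \<sigma> \<subseteq> T}"

definition is_sink_in :: "('v set \<times> 'v set) set \<Rightarrow> 'v set set \<Rightarrow> 'v set \<Rightarrow> bool" where
  "is_sink_in Or W t \<longleftrightarrow> t \<in> W \<and> \<not> (\<exists>u\<in>W. (t,u) \<in> Or)"

definition good_orientation :: "nat \<Rightarrow> 'v set set \<Rightarrow> ('v set \<times> 'v set) set \<Rightarrow> bool" where
  "good_orientation d \<Delta> Or \<longleftrightarrow> is_orientation d \<Delta> Or \<and>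
     (\<forall>k\<le>d. \<forall>\<sigma>\<in>\<Delta>. card \<sigma> = d - k \<longrightarrow>
        (\<exists>!t. is_sink_in Or (facets_containing \<Delta> \<sigma>) t))"

text \<open>k-frames as rooted stars (t, S): root t and a set S of k distinct
  neighbours of t in the facet-ridge graph.\<close>
definition k_frames :: "nat \<Rightarrow> 'v set set \<Rightarrow> nat \<Rightarrow> ('v set \<times> 'v set set) set" where
  "k_frames d \<Delta> k = {(t, S). t \<in> facets \<Delta> \<and> finite S \<and> card S = k \<and>
                      (\<forall>s\<in>S. fr_adjacent d \<Delta> t s)}"

definition in_frames :: "nat \<Rightarrow> 'v set set \<Rightarrow> ('v set \<times> 'v set) set \<Rightarrow> nat \<Rightarrow> ('v set \<times> 'v set set) set" where
  "in_frames d \<Delta> Or k = {(t, S) \<in> k_frames d \<Delta> k. \<forall>s\<in>S. (s, t) \<in> Or}"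

definition frame_face :: "'v set \<times> 'v set set \<Rightarrow> 'v set" where
  "frame_face F = fst F \<inter> \<Inter> (snd F)"

end

theory Submission
  imports Defs
begin

(* A simplicial sphere is a weak pseudomanifold: each ridge rho lies in exactly two facets,
   and both halves of this follow from invariance of domain.  If rho lay only in the facet T,
   a neighbourhood of the barycentre of rho in the sphere would be an open subset of the
   (d-1)-dimensional affine hull of T contained in the simplex T, although the barycentre lies
   on the boundary of that simplex.  If rho lay in three facets T1, T2, T3, folding a
   neighbourhood of the barycentre in the affine hull of T1 along rho onto T2 would give a set
   that is open in the sphere, yet misses the points of T3 near the barycentre.

   Hence every facet t has a unique neighbour opposite each of its vertices, the k-frames rooted
   at t are the sets of neighbours opposite the k-subsets V of t, and the face of such a frame is
   t - V.  All edges of the frame point into t exactly when t is a sink of the graph induced on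
   the facets containing t - V, and a good orientation has exactly one such sink; this gives the
   inverse map. *)

lemma insert_of_subset_card_Suc:
  assumes "\<rho> \<subseteq> T" "finite T" "card T = Suc (card \<rho>)"
  obtains a where "a \<notin> \<rho>" "T = insert a \<rho>"
proof -
  have "card (T - \<rho>) = 1"
    using assms by (simp add: card_Diff_subset finite_subset)
  then obtain a where "T - \<rho> = {a}"
    by (rule card_1_singletonE)
  then show thesis
    using that assms(1) by blast
qed

abbreviation std_simplex :: "'v::finite set \<Rightarrow> (real^'v) set" where
  "std_simplex \<sigma> \<equiv> convex hull ((\<lambda>v. axis v 1) ` \<sigma>)"

definition barycenter :: "'v::finite set \<Rightarrow> real^'v" where
  "barycenter \<rho> = (\<chi> i. if i \<in> \<rho> then 1 / real (card \<rho>) else 0)"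

lemma mem_std_simplex:
  fixes T :: "'v::finite set"
  shows "x \<in> std_simplex T \<longleftrightarrow>
     (\<forall>i. 0 \<le> x$i) \<and> (\<forall>i. i \<notin> T \<longrightarrow> x$i = 0) \<and> (\<Sum>i\<in>UNIV. x$i) = 1"
proof
  let ?S = "{y :: real^'v. (\<forall>i. 0 \<le> y$i) \<and> (\<forall>i. i \<notin> T \<longrightarrow> y$i = 0) \<and> (\<Sum>i\<in>UNIV. y$i) = 1}"
  assume "x \<in> std_simplex T"
  moreover have "std_simplex T \<subseteq> ?S"
  proof (rule hull_minimal)
    show "convex ?S"
      by (auto simp: convex_def sum.distrib simp flip: sum_distrib_left)
  qed (auto simp: axis_def)
  ultimately show "(\<forall>i. 0 \<le> x$i) \<and> (\<forall>i. i \<notin> T \<longrightarrow> x$i = 0) \<and> (\<Sum>i\<in>UNIV. x$i) = 1"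
    by blast
next
  assume x: "(\<forall>i. 0 \<le> x$i) \<and> (\<forall>i. i \<notin> T \<longrightarrow> x$i = 0) \<and> (\<Sum>i\<in>UNIV. x$i) = 1"
  have "(\<Sum>i\<in>UNIV. x$i) = (\<Sum>i\<in>T. x$i)"
    using x by (intro sum.mono_neutral_right) auto
  then have "(\<Sum>i\<in>T. (x$i) *\<^sub>R axis i 1) \<in> std_simplex T"
    using x by (intro convex_sum) (auto intro: hull_inc)
  moreover have "(\<Sum>i\<in>T. (x$i) *\<^sub>R axis i (1::real)) = x"
    using x by (auto simp: vec_eq_iff axis_def if_distrib sum.delta' cong: if_cong)
  ultimately show "x \<in> std_simplex T"
    by simp
qed

lemma affine_hull_axes_subset:
  "affine hull ((\<lambda>v. axis v 1) ` T) \<subseteq> {y :: real^'v::finite. (\<forall>i. i \<notin> T \<longrightarrow> y$i = 0) \<and> (\<Sum>i\<in>UNIV. y$i) = 1}"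
proof (rule hull_minimal)
  show "affine {y :: real^'v. (\<forall>i. i \<notin> T \<longrightarrow> y$i = 0) \<and> (\<Sum>i\<in>UNIV. y$i) = 1}"
    by (auto simp: affine_def sum.distrib simp flip: sum_distrib_left distrib_right)
qed (auto simp: axis_def)

lemma aff_dim_axes: "aff_dim ((\<lambda>v. axis v 1 :: real^'v::finite) ` T) = int (card T) - 1"
proof -
  have "(\<lambda>v. axis v 1 :: real^'v) ` T \<subseteq> Basis"
    by (auto simp: axis_in_Basis_iff)
  then have "\<not> affine_dependent ((\<lambda>v. axis v 1 :: real^'v) ` T)"
    using affine_dependent_imp_dependent independent_Basis independent_mono by blast
  moreover have "card ((\<lambda>v. axis v 1 :: real^'v) ` T) = card T"
    by (rule card_image) (auto simp: inj_on_def axis_eq_axis)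
  ultimately show ?thesis
    using aff_dim_affine_independent by fastforce
qed

lemma sum_barycenter: "\<rho> \<noteq> {} \<Longrightarrow> (\<Sum>i\<in>UNIV. barycenter \<rho> $ i) = 1"
  by (simp add: barycenter_def sum.If_cases)

lemma barycenter_in_std_simplex:
  assumes "\<rho> \<noteq> {}" "\<rho> \<subseteq> T"
  shows "barycenter \<rho> \<in> std_simplex T"
  using assms sum_barycenter[OF assms(1)] by (auto simp: mem_std_simplex barycenter_def)

lemma std_simplex_subset_realization:
  "\<sigma> \<in> \<Delta> \<Longrightarrow> std_simplex \<sigma> \<subseteq> geometric_realization \<Delta>"
  unfolding geometric_realization_def by blast

lemma face_subset_facet:
  fixes \<Delta> :: "'v::finite set set"
  assumes "\<sigma> \<in> \<Delta>"
  obtains T where "T \<in> facets \<Delta>" "\<sigma> \<subseteq> T"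
proof -
  have "finite {\<tau>\<in>\<Delta>. \<sigma> \<subseteq> \<tau>}" "{\<tau>\<in>\<Delta>. \<sigma> \<subseteq> \<tau>} \<noteq> {}"
    using assms by auto
  then obtain T where "T \<in> {\<tau>\<in>\<Delta>. \<sigma> \<subseteq> \<tau>}" and "\<forall>T'\<in>{\<tau>\<in>\<Delta>. \<sigma> \<subseteq> \<tau>}. T \<subseteq> T' \<longrightarrow> T = T'"
    using finite_has_maximal by meson
  then have "T \<in> facets \<Delta>" "\<sigma> \<subseteq> T"
    unfolding facets_def by auto
  then show thesis
    using that by blast
qed

lemma nth_gt_of_dist_less:
  fixes x y :: "real^'v::finite"
  assumes "dist x y < r"
  shows "x $ i - r < y $ i"
proof -
  have "\<bar>x $ i - y $ i\<bar> < r"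
    using assms component_le_norm_cart[of "x - y" i] by (simp add: dist_norm)
  then show ?thesis
    by linarith
qed

lemma realization_near_barycenter:
  fixes \<Delta> :: "'v::finite set set"
  assumes "x \<in> geometric_realization \<Delta>" "dist (barycenter \<rho>) x < 1 / real (card \<rho>)"
  obtains T where "T \<in> facets \<Delta>" "\<rho> \<subseteq> T" "x \<in> std_simplex T"
proof -
  obtain \<sigma> where \<sigma>: "\<sigma> \<in> \<Delta>" "x \<in> std_simplex \<sigma>"
    using assms(1) unfolding geometric_realization_def by blast
  have "\<rho> \<subseteq> \<sigma>"
  proof
    fix u assume "u \<in> \<rho>"
    then have "x $ u \<noteq> 0"
      using nth_gt_of_dist_less[OF assms(2), of u] by (simp add: barycenter_def)
    then show "u \<in> \<sigma>"
      using \<sigma>(2) by (auto simp: mem_std_simplex)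
  qed
  obtain T where "T \<in> facets \<Delta>" "\<sigma> \<subseteq> T"
    using face_subset_facet[OF \<sigma>(1)] .
  moreover have "std_simplex \<sigma> \<subseteq> std_simplex T"
    using \<open>\<sigma> \<subseteq> T\<close> by (intro hull_mono image_mono)
  ultimately show thesis
    using that \<open>\<rho> \<subseteq> \<sigma>\<close> \<sigma>(2) by blast
qed

lemma exists_small_multiple:
  fixes v :: "'a::real_normed_vector"
  assumes "0 < \<epsilon>"
  obtains \<delta> where "0 < \<delta>" "\<delta> \<le> 1" "norm (\<delta> *\<^sub>R v) < \<epsilon>"
proof
  define \<delta> where "\<delta> = min 1 (\<epsilon> / (2 * (norm v + 1)))"
  have "norm v + 1 > 0"
    by (simp add: add_nonneg_pos)
  then have pos: "0 < \<epsilon> / (2 * (norm v + 1))"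
    using assms by simp
  then show "0 < \<delta>" "\<delta> \<le> 1"
    by (simp_all add: \<delta>_def)
  have "\<delta> * norm v \<le> \<epsilon> / (2 * (norm v + 1)) * (norm v + 1)"
    unfolding \<delta>_def using pos by (intro mult_mono) auto
  also have "\<dots> = \<epsilon> / 2"
    using \<open>norm v + 1 > 0\<close> by (simp add: field_simps)
  also have "\<dots> < \<epsilon>"
    using assms by simp
  finally show "norm (\<delta> *\<^sub>R v) < \<epsilon>"
    using \<open>0 < \<delta>\<close> by simp
qed

lemma affine_hull_near_barycenter_nth_neg:
  assumes "\<rho> \<noteq> {}" "a \<notin> \<rho>" "0 < \<epsilon>"
  obtains z where "z \<in> affine hull ((\<lambda>v. axis v 1) ` insert a \<rho>)"
    "dist (barycenter \<rho>) z < \<epsilon>" "z $ a < 0"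
proof -
  obtain \<delta> where \<delta>: "0 < \<delta>" "norm (\<delta> *\<^sub>R (barycenter \<rho> - axis a 1)) < \<epsilon>"
    using exists_small_multiple[OF assms(3)] by metis
  define z where "z = (1 + \<delta>) *\<^sub>R barycenter \<rho> + (- \<delta>) *\<^sub>R axis a 1"
  have "barycenter \<rho> \<in> affine hull ((\<lambda>v. axis v 1) ` insert a \<rho>)"
    using barycenter_in_std_simplex[OF assms(1), of "insert a \<rho>"] convex_hull_subset_affine_hull
    by blast
  moreover have "axis a 1 \<in> affine hull ((\<lambda>v. axis v 1) ` insert a \<rho>)"
    by (intro hull_inc) auto
  ultimately have "z \<in> affine hull ((\<lambda>v. axis v 1) ` insert a \<rho>)"
    unfolding z_def by (intro mem_affine[OF affine_affine_hull]) auto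
  moreover have "barycenter \<rho> - z = - (\<delta> *\<^sub>R (barycenter \<rho> - axis a 1))"
    by (simp add: z_def algebra_simps)
  then have "dist (barycenter \<rho>) z < \<epsilon>"
    using \<delta>(2) by (simp add: dist_norm)
  moreover have "z $ a < 0"
    using assms(2) \<delta>(1) by (simp add: z_def barycenter_def axis_def)
  ultimately show thesis
    using that by blast
qed

lemma std_simplex_near_barycenter_nth_pos:
  assumes "\<rho> \<noteq> {}" "c \<notin> \<rho>" "0 < \<epsilon>"
  obtains z where "z \<in> std_simplex (insert c \<rho>)" "dist (barycenter \<rho>) z < \<epsilon>" "0 < z $ c"
proof -
  obtain \<delta> where \<delta>: "0 < \<delta>" "\<delta> \<le> 1" "norm (\<delta> *\<^sub>R (axis c 1 - barycenter \<rho>)) < \<epsilon>"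
    using exists_small_multiple[OF assms(3)] by metis
  define z where "z = (1 - \<delta>) *\<^sub>R barycenter \<rho> + \<delta> *\<^sub>R axis c 1"
  have "z \<in> std_simplex (insert c \<rho>)"
    unfolding z_def using barycenter_in_std_simplex[OF assms(1), of "insert c \<rho>"] \<delta>
    by (intro convexD[OF convex_convex_hull]) (auto intro: hull_inc)
  moreover have "barycenter \<rho> - z = - (\<delta> *\<^sub>R (axis c 1 - barycenter \<rho>))"
    by (simp add: z_def algebra_simps)
  then have "dist (barycenter \<rho>) z < \<epsilon>"
    using \<delta>(3) by (simp add: dist_norm)
  moreover have "0 < z $ c"
    using assms(2) \<delta>(1) by (simp add: z_def barycenter_def axis_def)
  ultimately show thesis
    using that by blast
qed

section \<open>Invariance of domain in spaces homeomorphic to spheres\<close>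

lemma openin_affine_if_homeomorphic_sphere:
  fixes X :: "'a::euclidean_space set" and x0 :: "'b::euclidean_space"
  assumes "X homeomorphic sphere x0 r" "0 < r"
    and "openin (top_of_set X) N" "N \<subseteq> A" "affine A" "aff_dim A < DIM('b)"
  shows "openin (top_of_set A) N"
proof -
  obtain h g where hom: "homeomorphism X (sphere x0 r) h g"
    using assms(1) homeomorphic_def by blast
  have "N \<subseteq> X"
    using assms(3) openin_imp_subset by blast
  then have homN: "homeomorphism N (h ` N) h g"
    using hom homeomorphism_of_subsets homeomorphism_image1 by blast
  have "openin (top_of_set A) (g ` h ` N)"
  proof (rule invariance_of_domain_sphere_affine_set)
    show "continuous_on (h ` N) g"
      by (rule homeomorphism_cont2[OF homN])
    show "inj_on g (h ` N)"
      by (rule inj_on_inverseI[where g = h]) (rule homeomorphism_apply2[OF homN])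
    show "openin (top_of_set (sphere x0 r)) (h ` N)"
      using hom assms(3) by (rule homeomorphism_imp_open_map)
  qed (use homN assms in \<open>auto simp: homeomorphism_apply1\<close>)
  then show ?thesis
    using homN homeomorphism_image2 by metis
qed

lemma homeomorphic_sphere_delete:
  fixes X :: "'a::euclidean_space set" and x0 :: "'b::euclidean_space"
  assumes "X homeomorphic sphere x0 r" "0 < r" "q \<in> X"
  obtains V :: "'b set" where "affine V" "aff_dim V = int DIM('b) - 1" "(X - {q}) homeomorphic V"
proof -
  obtain h g where hom: "homeomorphism X (sphere x0 r) h g"
    using assms(1) homeomorphic_def by blast
  have "inj_on h X"
    by (rule inj_on_inverseI[where g = g]) (rule homeomorphism_apply1[OF hom])
  then have "h ` (X - {q}) = sphere x0 r - {h q}"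
    using assms(3) homeomorphism_image1[OF hom] by (simp add: inj_on_image_set_diff)
  then have "homeomorphism (X - {q}) (sphere x0 r - {h q}) h g"
    by (rule homeomorphism_of_subsets[OF hom Diff_subset Diff_subset])
  then have "(X - {q}) homeomorphic (sphere x0 r - {h q})"
    unfolding homeomorphic_def by blast
  moreover obtain b :: 'b where "b \<in> Basis"
    using nonempty_Basis by blast
  then have "b \<noteq> 0"
    by auto
  moreover have "h q \<in> sphere x0 r"
    using assms(3) homeomorphism_image1[OF hom] by blast
  ultimately have "(X - {q}) homeomorphic {x. b \<bullet> x = 0}"
    using homeomorphic_punctured_sphere_hyperplane[OF assms(2)] homeomorphic_trans by blast
  then show thesis
    using \<open>b \<noteq> 0\<close> by (intro that[of "{x. b \<bullet> x = 0}"] affine_hyperplane) simp_all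
qed

lemma invariance_of_domain_homeomorphic_affine:
  fixes \<psi> :: "'a::euclidean_space \<Rightarrow> 'b::euclidean_space" and V :: "'c::euclidean_space set"
  assumes "Y homeomorphic V" "affine V" "affine A" "aff_dim V \<le> aff_dim A"
    and "openin (top_of_set A) U" "continuous_on U \<psi>" "inj_on \<psi> U" "\<psi> ` U \<subseteq> Y"
  shows "openin (top_of_set Y) (\<psi> ` U)"
proof -
  obtain f f' where hom: "homeomorphism Y V f f'"
    using assms(1) homeomorphic_def by blast
  have "openin (top_of_set V) ((f \<circ> \<psi>) ` U)"
  proof (rule invariance_of_domain_affine_sets[OF assms(5,3,2,4)])
    show "continuous_on U (f \<circ> \<psi>)"
      using assms(6,8) hom by (metis continuous_on_compose continuous_on_subset homeomorphism_cont1)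
    show "f \<circ> \<psi> \<in> U \<rightarrow> V"
      using assms(8) hom by (auto simp: homeomorphism_def)
    have "inj_on f Y"
      by (rule inj_on_inverseI[where g = f']) (rule homeomorphism_apply1[OF hom])
    then show "inj_on (f \<circ> \<psi>) U"
      by (rule comp_inj_on[OF assms(7) inj_on_subset[OF _ assms(8)]])
  qed
  then have "openin (top_of_set Y) (f' ` (f \<circ> \<psi>) ` U)"
    using homeomorphism_imp_open_map[OF homeomorphism_symD[OF hom]] by blast
  moreover have "f' ` (f \<circ> \<psi>) ` U = \<psi> ` U"
  proof -
    have "f' ` (f \<circ> \<psi>) ` U = (\<lambda>x. f' (f x)) ` \<psi> ` U"
      by (simp add: image_comp o_def)
    also have "\<dots> = id ` \<psi> ` U"
      using assms(8) homeomorphism_apply1[OF hom] by (intro image_cong) auto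
    finally show ?thesis
      by simp
  qed
  ultimately show ?thesis
    by simp
qed

lemma openin_image_if_homeomorphic_sphere:
  fixes X :: "'a::euclidean_space set" and x0 :: "'b::euclidean_space"
    and \<psi> :: "'c::euclidean_space \<Rightarrow> 'a"
  assumes "X homeomorphic sphere x0 r" "0 < r"
    and "affine A" "aff_dim A = int DIM('b) - 1" "openin (top_of_set A) U"
    and "continuous_on U \<psi>" "inj_on \<psi> U" "\<psi> ` U \<subseteq> X" "q \<in> X" "q \<notin> \<psi> ` U"
  shows "openin (top_of_set X) (\<psi> ` U)"
proof -
  obtain V :: "'b set" where "affine V" "aff_dim V = int DIM('b) - 1" "(X - {q}) homeomorphic V"
    using homeomorphic_sphere_delete[OF assms(1,2,9)] .
  then have "openin (top_of_set (X - {q})) (\<psi> ` U)"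
    using assms by (intro invariance_of_domain_homeomorphic_affine) auto
  moreover have "openin (top_of_set X) (X - {q})"
    by (simp add: openin_delete)
  ultimately show ?thesis
    using openin_trans by blast
qed

lemma barycenter_notin_openin_std_simplex:
  fixes x0 :: "'b::euclidean_space" and \<rho> :: "'v::finite set"
  assumes "X homeomorphic sphere x0 r" "0 < r" "DIM('b) = Suc (card \<rho>)"
    and "\<rho> \<noteq> {}" "a \<notin> \<rho>" "openin (top_of_set X) N" "N \<subseteq> std_simplex (insert a \<rho>)"
  shows "barycenter \<rho> \<notin> N"
proof
  assume "barycenter \<rho> \<in> N"
  define A :: "(real^'v) set" where "A = affine hull ((\<lambda>v. axis v 1) ` insert a \<rho>)"
  have "openin (top_of_set A) N"
  proof (rule openin_affine_if_homeomorphic_sphere[OF assms(1,2,6)])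
    show "N \<subseteq> A"
      using assms(7) convex_hull_subset_affine_hull unfolding A_def by blast
    show "aff_dim A < DIM('b)"
      using aff_dim_axes[of "insert a \<rho>"] assms(3,5) unfolding A_def by simp
  qed (simp add: A_def)
  then obtain \<epsilon> where "0 < \<epsilon>" and ball_N: "ball (barycenter \<rho>) \<epsilon> \<inter> A \<subseteq> N"
    using \<open>barycenter \<rho> \<in> N\<close> by (meson openin_contains_ball)
  then obtain z where "z \<in> A" "dist (barycenter \<rho>) z < \<epsilon>" "z $ a < 0"
    using affine_hull_near_barycenter_nth_neg[OF assms(4,5)] unfolding A_def by metis
  then have "z \<in> std_simplex (insert a \<rho>)"
    using ball_N assms(7) by auto
  with \<open>z $ a < 0\<close> show False
    using mem_std_simplex by (metis not_le)
qed

lemma barycenter_notin_openin_nth_zero: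
  assumes "openin (top_of_set X) W" "\<forall>z\<in>W. z $ c = 0" "std_simplex (insert c \<rho>) \<subseteq> X"
    and "\<rho> \<noteq> {}" "c \<notin> \<rho>"
  shows "barycenter \<rho> \<notin> W"
proof
  assume "barycenter \<rho> \<in> W"
  then obtain \<epsilon> where "0 < \<epsilon>" and ball_W: "ball (barycenter \<rho>) \<epsilon> \<inter> X \<subseteq> W"
    using assms(1) by (meson openin_contains_ball)
  then obtain z where "z \<in> std_simplex (insert c \<rho>)" "dist (barycenter \<rho>) z < \<epsilon>" "0 < z $ c"
    using std_simplex_near_barycenter_nth_pos[OF assms(4,5)] by metis
  then show False
    using ball_W assms(2,3) by fastforce
qed

section \<open>Folding two simplices along a common ridge\<close>

(* The part of the affine hull of the simplex on insert a rho beyond the ridge rho, where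
   y$a < 0, is sheared onto the simplex on insert b rho. *)
definition fold_map :: "'v::finite \<Rightarrow> 'v \<Rightarrow> 'v set \<Rightarrow> real^'v \<Rightarrow> real^'v" where
  "fold_map a b \<rho> y = y + min (y$a) 0 *\<^sub>R (2 *\<^sub>R barycenter \<rho> - axis a 1 - axis b 1)"

lemma fold_map_nth:
  "fold_map a b \<rho> y $ i =
     y $ i + min (y$a) 0 * (2 * barycenter \<rho> $ i - (if i = a then 1 else 0) - (if i = b then 1 else 0))"
  by (simp add: fold_map_def axis_def)

lemma continuous_on_fold_map: "continuous_on S (fold_map a b \<rho>)"
  unfolding fold_map_def by (intro continuous_intros)

lemma inj_on_fold_map:
  assumes "a \<noteq> b" "b \<notin> \<rho>"
  shows "inj_on (fold_map a b \<rho>) {y. y$b = 0}"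
proof (rule inj_onI)
  fix y y' assume "y \<in> {y. y$b = 0}" "y' \<in> {y. y$b = 0}" and eq: "fold_map a b \<rho> y = fold_map a b \<rho> y'"
  moreover have "fold_map a b \<rho> z $ b = z $ b - min (z$a) 0" for z
    using assms by (simp add: fold_map_nth barycenter_def)
  then have "y $ b - min (y$a) 0 = y' $ b - min (y'$a) 0"
    using eq by metis
  ultimately have "min (y$a) 0 = min (y'$a) 0"
    by simp
  then show "y = y'"
    using eq by (simp add: fold_map_def)
qed

lemma fold_map_barycenter: "a \<notin> \<rho> \<Longrightarrow> fold_map a b \<rho> (barycenter \<rho>) = barycenter \<rho>"
  by (simp add: fold_map_def barycenter_def)

lemma sum_fold_map:
  assumes "\<rho> \<noteq> {}"
  shows "(\<Sum>i\<in>UNIV. fold_map a b \<rho> y $ i) = (\<Sum>i\<in>UNIV. y$i)"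
proof -
  have "(\<Sum>i\<in>UNIV. 2 * barycenter \<rho> $ i - (if i = a then 1 else 0) - (if i = b then 1 else (0::real))) = 0"
    using sum_barycenter[OF assms] by (simp add: sum_subtractf flip: sum_distrib_left)
  then show ?thesis
    by (simp add: fold_map_nth sum.distrib flip: sum_distrib_left)
qed

lemma fold_map_mem_std_simplex_if_nonneg:
  assumes y: "y \<in> affine hull ((\<lambda>v. axis v 1) ` insert a \<rho>)"
    and "0 \<le> y $ a" "\<forall>i\<in>\<rho>. 0 \<le> y $ i"
  shows "fold_map a b \<rho> y \<in> std_simplex (insert a \<rho>)"
proof -
  have outside: "\<forall>i. i \<notin> insert a \<rho> \<longrightarrow> y$i = 0" and "(\<Sum>i\<in>UNIV. y$i) = 1"
    using affine_hull_axes_subset y by blast+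
  moreover have "0 \<le> y $ i" for i
    using assms(2,3) outside by (cases "i \<in> insert a \<rho>") auto
  moreover have "fold_map a b \<rho> y = y"
    using assms(2) by (simp add: fold_map_def)
  ultimately show ?thesis
    unfolding mem_std_simplex by simp
qed

lemma fold_map_mem_std_simplex_if_neg:
  assumes "\<rho> \<noteq> {}" "a \<notin> \<rho>" "b \<notin> \<rho>" "a \<noteq> b"
    and y: "y \<in> affine hull ((\<lambda>v. axis v 1) ` insert a \<rho>)"
    and "y $ a < 0" "\<forall>i\<in>\<rho>. 0 \<le> y $ i + y $ a * (2 / real (card \<rho>))"
  shows "fold_map a b \<rho> y \<in> std_simplex (insert b \<rho>)"
proof -
  have outside: "\<forall>i. i \<notin> insert a \<rho> \<longrightarrow> y$i = 0" and "(\<Sum>i\<in>UNIV. y$i) = 1"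
    using affine_hull_axes_subset y by blast+
  have coord: "fold_map a b \<rho> y $ i =
      (if i \<in> \<rho> then y $ i + y $ a * (2 / real (card \<rho>)) else if i = b then - y $ a else 0)" for i
    using outside assms(2-4,6) by (auto simp: fold_map_nth barycenter_def)
  show ?thesis
    unfolding mem_std_simplex
  proof (intro conjI allI impI)
    show "0 \<le> fold_map a b \<rho> y $ i" for i
      using coord[of i] assms(6,7) by auto
    show "fold_map a b \<rho> y $ i = 0" if "i \<notin> insert b \<rho>" for i
      using coord[of i] that by auto
  qed (simp add: sum_fold_map[OF assms(1)] \<open>(\<Sum>i\<in>UNIV. y$i) = 1\<close>)
qed

lemma fold_map_mem_std_simplices:
  assumes "\<rho> \<noteq> {}" "a \<notin> \<rho>" "b \<notin> \<rho>" "a \<noteq> b"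
    and y: "y \<in> affine hull ((\<lambda>v. axis v 1) ` insert a \<rho>)"
    and near: "dist (barycenter \<rho>) y < 1 / (4 * real (card \<rho>))"
  shows "fold_map a b \<rho> y \<in> std_simplex (insert a \<rho>) \<union> std_simplex (insert b \<rho>)"
proof -
  define c where "c = 1 / real (card \<rho>)"
  have "0 < card \<rho>"
    using assms(1) by (simp add: card_gt_0_iff)
  then have c: "0 < c" "c \<le> 1"
    by (simp_all add: c_def)
  have near_c: "dist (barycenter \<rho>) y < c / 4"
    using near by (simp add: c_def field_simps)
  have y_\<rho>: "3 / 4 * c < y $ i" if "i \<in> \<rho>" for i
    using nth_gt_of_dist_less[OF near_c, of i] that by (simp add: barycenter_def c_def)
  show ?thesis
  proof (cases "0 \<le> y $ a")
    case True
    then show ?thesis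
      using fold_map_mem_std_simplex_if_nonneg[OF y] y_\<rho> c by force
  next
    case False
    have "- c / 4 < y $ a"
      using nth_gt_of_dist_less[OF near_c, of a] assms(2) by (simp add: barycenter_def)
    moreover have "y $ a * 2 \<le> y $ a * (2 * c)"
      using False c by (intro mult_left_mono_neg) auto
    ultimately have "0 \<le> y $ i + y $ a * (2 * c)" if "i \<in> \<rho>" for i
      using y_\<rho>[OF that] c by linarith
    moreover have "y $ a * (2 / real (card \<rho>)) = y $ a * (2 * c)"
      by (simp add: c_def)
    ultimately have "\<forall>i\<in>\<rho>. 0 \<le> y $ i + y $ a * (2 / real (card \<rho>))"
      by simp
    then show ?thesis
      using fold_map_mem_std_simplex_if_neg[OF assms(1-4) y] False by simp
  qed
qed

lemma fold_map_neighbourhood: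
  fixes \<rho> :: "'v::finite set"
  assumes "\<rho> \<noteq> {}" "a \<notin> \<rho>" "b \<notin> \<rho>" "a \<noteq> b"
  obtains U where "openin (top_of_set (affine hull ((\<lambda>v. axis v 1) ` insert a \<rho>))) U"
    "inj_on (fold_map a b \<rho>) U" "barycenter \<rho> \<in> fold_map a b \<rho> ` U"
    "fold_map a b \<rho> ` U \<subseteq> std_simplex (insert a \<rho>) \<union> std_simplex (insert b \<rho>)"
proof -
  define A :: "(real^'v) set" where "A = affine hull ((\<lambda>v. axis v 1) ` insert a \<rho>)"
  define U where "U = A \<inter> ball (barycenter \<rho>) (1 / (4 * real (card \<rho>)))"
  have "openin (top_of_set A) U"
    unfolding U_def by (simp add: openin_open_Int)
  moreover have "U \<subseteq> {y. y $ b = 0}"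
    using affine_hull_axes_subset[of "insert a \<rho>"] assms(3,4) unfolding U_def A_def by auto
  then have "inj_on (fold_map a b \<rho>) U"
    using inj_on_fold_map[OF assms(4,3)] inj_on_subset by blast
  moreover have "barycenter \<rho> \<in> U"
    using barycenter_in_std_simplex[OF assms(1), of "insert a \<rho>"] convex_hull_subset_affine_hull
      assms(1)
    unfolding U_def A_def by (auto simp: card_gt_0_iff)
  then have "barycenter \<rho> \<in> fold_map a b \<rho> ` U"
    using fold_map_barycenter[OF assms(2)] by (metis image_eqI)
  moreover have "fold_map a b \<rho> y \<in> std_simplex (insert a \<rho>) \<union> std_simplex (insert b \<rho>)"
    if "y \<in> U" for y
    using that fold_map_mem_std_simplices[OF assms, of y] unfolding U_def A_def by simp
  then have "fold_map a b \<rho> ` U \<subseteq> std_simplex (insert a \<rho>) \<union> std_simplex (insert b \<rho>)"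
    by blast
  ultimately show thesis
    using that unfolding A_def by blast
qed

section \<open>Ridges of a simplicial sphere\<close>

lemma ridge_in_second_facet:
  fixes \<Delta> :: "'v::finite set set" and x0 :: "'b::euclidean_space"
  assumes sphere: "geometric_realization \<Delta> homeomorphic sphere x0 r" "0 < r"
    and dim: "DIM('b) = d" "2 \<le> d" and pure: "\<forall>T\<in>facets \<Delta>. card T = d"
    and T: "T \<in> facets \<Delta>" "\<rho> \<subseteq> T" "card \<rho> = d - 1"
  shows "\<exists>T'\<in>facets \<Delta>. T' \<noteq> T \<and> \<rho> \<subseteq> T'"
proof (rule ccontr)
  assume "\<not> ?thesis"
  then have only_T: "T' = T" if "T' \<in> facets \<Delta>" "\<rho> \<subseteq> T'" for T'
    using that by blast
  have "card T = Suc (card \<rho>)"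
    using pure T(1,3) dim(2) by simp
  then obtain a where a: "a \<notin> \<rho>" "T = insert a \<rho>"
    using insert_of_subset_card_Suc[OF T(2) finite] by blast
  define N where "N = geometric_realization \<Delta> \<inter> ball (barycenter \<rho>) (1 / real (card \<rho>))"
  have "\<rho> \<noteq> {}"
    using T(3) dim by auto
  have "N \<subseteq> std_simplex T"
  proof
    fix x assume "x \<in> N"
    then have "x \<in> geometric_realization \<Delta>" "dist (barycenter \<rho>) x < 1 / real (card \<rho>)"
      unfolding N_def by auto
    then obtain T' where "T' \<in> facets \<Delta>" "\<rho> \<subseteq> T'" "x \<in> std_simplex T'"
      by (rule realization_near_barycenter)
    then show "x \<in> std_simplex T"
      using only_T by blast
  qed
  moreover have "openin (top_of_set (geometric_realization \<Delta>)) N"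
    unfolding N_def by (simp add: openin_open_Int)
  moreover have "barycenter \<rho> \<in> N"
    using barycenter_in_std_simplex[OF \<open>\<rho> \<noteq> {}\<close> T(2)] std_simplex_subset_realization T(1)
      \<open>\<rho> \<noteq> {}\<close>
    unfolding N_def facets_def by (auto simp: card_gt_0_iff)
  moreover have "DIM('b) = Suc (card \<rho>)"
    using T(3) dim by simp
  ultimately show False
    using barycenter_notin_openin_std_simplex[OF sphere _ \<open>\<rho> \<noteq> {}\<close> a(1)] a(2) by blast
qed

lemma ridge_in_at_most_two_facets:
  fixes \<Delta> :: "'v::finite set set" and x0 :: "'b::euclidean_space"
  assumes sphere: "geometric_realization \<Delta> homeomorphic sphere x0 r" "0 < r"
    and dim: "DIM('b) = d" "2 \<le> d" and pure: "\<forall>T\<in>facets \<Delta>. card T = d"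
    and facets: "T1 \<in> facets \<Delta>" "T2 \<in> facets \<Delta>" "T3 \<in> facets \<Delta>"
    and distinct: "T1 \<noteq> T2" "T1 \<noteq> T3" "T2 \<noteq> T3"
    and ridge: "\<rho> \<subseteq> T1" "\<rho> \<subseteq> T2" "\<rho> \<subseteq> T3" "card \<rho> = d - 1"
  shows False
proof -
  have card_T: "card T = Suc (card \<rho>)" if "T \<in> facets \<Delta>" for T
    using that pure ridge(4) dim by auto
  obtain a where a: "a \<notin> \<rho>" "T1 = insert a \<rho>"
    using insert_of_subset_card_Suc[OF ridge(1) finite card_T[OF facets(1)]] by blast
  obtain b where b: "b \<notin> \<rho>" "T2 = insert b \<rho>"
    using insert_of_subset_card_Suc[OF ridge(2) finite card_T[OF facets(2)]] by blast
  obtain c where c: "c \<notin> \<rho>" "T3 = insert c \<rho>"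
    using insert_of_subset_card_Suc[OF ridge(3) finite card_T[OF facets(3)]] by blast
  have "a \<noteq> b" "c \<notin> T1" "c \<notin> T2" "\<rho> \<noteq> {}"
    using a b c distinct ridge(4) dim by auto
  define X where "X = geometric_realization \<Delta>"
  have simplex_X: "std_simplex T \<subseteq> X" if "T \<in> facets \<Delta>" for T
    using that std_simplex_subset_realization unfolding X_def facets_def by blast
  obtain U where U: "openin (top_of_set (affine hull ((\<lambda>v. axis v 1) ` T1))) U"
    "inj_on (fold_map a b \<rho>) U" "barycenter \<rho> \<in> fold_map a b \<rho> ` U"
    and U_T12: "fold_map a b \<rho> ` U \<subseteq> std_simplex T1 \<union> std_simplex T2"
    using fold_map_neighbourhood[OF \<open>\<rho> \<noteq> {}\<close> a(1) b(1) \<open>a \<noteq> b\<close>] unfolding a(2) b(2) by blast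
  have c_zero: "\<forall>z\<in>fold_map a b \<rho> ` U. z $ c = 0"
    using U_T12 \<open>c \<notin> T1\<close> \<open>c \<notin> T2\<close> by (auto simp: mem_std_simplex)
  have "openin (top_of_set X) (fold_map a b \<rho> ` U)"
  proof (rule openin_image_if_homeomorphic_sphere[where q = "axis c 1",
        OF sphere[folded X_def] affine_affine_hull _ U(1) continuous_on_fold_map U(2)])
    show "aff_dim (affine hull ((\<lambda>v. axis v 1 :: real^'v) ` T1)) = int DIM('b) - 1"
      using aff_dim_axes[of T1] pure facets(1) dim by simp
    show "fold_map a b \<rho> ` U \<subseteq> X"
      using U_T12 simplex_X facets by blast
    show "axis c 1 \<in> X"
      using simplex_X[OF facets(3)] c(2) by (auto intro: hull_inc)
    show "axis c 1 \<notin> fold_map a b \<rho> ` U"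
    proof
      assume "axis c 1 \<in> fold_map a b \<rho> ` U"
      then have "axis c 1 $ c = (0::real)"
        using c_zero by blast
      then show False
        by simp
    qed
  qed
  then show False
    using barycenter_notin_openin_nth_zero[OF _ c_zero _ \<open>\<rho> \<noteq> {}\<close> c(1)] simplex_X[OF facets(3)]
      c(2) U(3)
    by blast
qed

lemma ex1_facet_opposite_vertex:
  fixes \<Delta> :: "'v::finite set set" and x0 :: "'b::euclidean_space"
  assumes sphere: "geometric_realization \<Delta> homeomorphic sphere x0 r" "0 < r"
    and dim: "DIM('b) = d" "2 \<le> d" and pure: "\<forall>T\<in>facets \<Delta>. card T = d"
    and "T \<in> facets \<Delta>" "v \<in> T"
  shows "\<exists>!T'. T' \<in> facets \<Delta> \<and> T' \<noteq> T \<and> T - {v} \<subseteq> T'"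
proof -
  have "card (T - {v}) = d - 1"
    using assms pure by simp
  then show ?thesis
    using ridge_in_second_facet[OF sphere dim pure \<open>T \<in> facets \<Delta>\<close>, of "T - {v}"]
      ridge_in_at_most_two_facets[OF sphere dim pure \<open>T \<in> facets \<Delta>\<close>, of _ _ "T - {v}"]
    by blast
qed

section \<open>Frames of weak pseudomanifolds\<close>

locale weak_pseudomanifold =
  fixes d :: nat and \<Delta> :: "'v::finite set set"
  assumes downward_closed: "\<sigma> \<in> \<Delta> \<Longrightarrow> \<tau> \<subseteq> \<sigma> \<Longrightarrow> \<tau> \<in> \<Delta>"
    and card_facet: "T \<in> facets \<Delta> \<Longrightarrow> card T = d"
    and ex1_opposite: "T \<in> facets \<Delta> \<Longrightarrow> v \<in> T \<Longrightarrow> \<exists>!T'. T' \<in> facets \<Delta> \<and> T' \<noteq> T \<and> T - {v} \<subseteq> T'"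
begin

definition opposite :: "'v set \<Rightarrow> 'v \<Rightarrow> 'v set" where
  "opposite T v = (THE T'. T' \<in> facets \<Delta> \<and> T' \<noteq> T \<and> T - {v} \<subseteq> T')"

lemma opposite_facet:
  assumes "T \<in> facets \<Delta>" "v \<in> T"
  shows "opposite T v \<in> facets \<Delta>" "opposite T v \<noteq> T" "T - {v} \<subseteq> opposite T v"
  using theI'[OF ex1_opposite[OF assms]] unfolding opposite_def by blast+

lemma opposite_unique:
  assumes "T \<in> facets \<Delta>" "v \<in> T" "T' \<in> facets \<Delta>" "T' \<noteq> T" "T - {v} \<subseteq> T'"
  shows "T' = opposite T v"
  using ex1_opposite[OF assms(1,2)] opposite_facet[OF assms(1,2)] assms(3-5) by blast

lemma vertex_notin_opposite:
  assumes "T \<in> facets \<Delta>" "v \<in> T"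
  shows "v \<notin> opposite T v"
proof
  assume "v \<in> opposite T v"
  then have "T \<subseteq> opposite T v"
    using opposite_facet(3)[OF assms] by blast
  moreover have "card T = card (opposite T v)"
    using card_facet opposite_facet(1)[OF assms] assms(1) by simp
  ultimately have "T = opposite T v"
    by (simp add: card_subset_eq)
  then show False
    using opposite_facet(2)[OF assms] by simp
qed

lemma fr_adjacent_opposite:
  assumes "T \<in> facets \<Delta>" "v \<in> T"
  shows "fr_adjacent d \<Delta> T (opposite T v)"
  unfolding fr_adjacent_def
  using opposite_facet[OF assms] assms card_facet[OF assms(1)] by auto

lemma fr_adjacent_imp_opposite:
  assumes "fr_adjacent d \<Delta> T S"
  obtains v where "v \<in> T" "S = opposite T v"
proof -
  obtain \<rho> where \<rho>: "card \<rho> = d - 1" "\<rho> \<subseteq> T" "\<rho> \<subseteq> S"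
    and T: "T \<in> facets \<Delta>" and S: "S \<in> facets \<Delta>" "S \<noteq> T"
    using assms unfolding fr_adjacent_def by blast
  have "\<not> T \<subseteq> \<rho>"
  proof
    assume "T \<subseteq> \<rho>"
    then have "T \<subseteq> S"
      using \<rho>(3) by blast
    then show False
      using S card_facet[OF T] card_facet[OF S(1)] card_subset_eq by (metis finite)
  qed
  then have "card \<rho> < card T"
    using \<rho>(2) by (metis finite psubset_card_mono psubsetI)
  then have "card T = Suc (card \<rho>)"
    using \<rho>(1) card_facet[OF T] by arith
  then obtain v where "v \<notin> \<rho>" "T = insert v \<rho>"
    using insert_of_subset_card_Suc[OF \<rho>(2) finite] by blast
  then have "v \<in> T" "S = opposite T v"
    using opposite_unique[OF T _ S(1) S(2)] \<rho>(3) by auto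
  then show thesis
    using that by blast
qed

lemma inj_on_opposite:
  assumes "T \<in> facets \<Delta>"
  shows "inj_on (opposite T) T"
proof (rule inj_onI)
  fix v w assume "v \<in> T" "w \<in> T" "opposite T v = opposite T w"
  then show "v = w"
    using opposite_facet(3)[OF assms \<open>w \<in> T\<close>] vertex_notin_opposite[OF assms \<open>v \<in> T\<close>] by blast
qed

lemma facet_Int_opposites:
  assumes "T \<in> facets \<Delta>" "V \<subseteq> T"
  shows "T \<inter> \<Inter> (opposite T ` V) = T - V"
  using opposite_facet(3)[OF assms(1)] vertex_notin_opposite[OF assms(1)] assms(2) by blast

lemma frame_face_opposites:
  "t \<in> facets \<Delta> \<Longrightarrow> V \<subseteq> t \<Longrightarrow> frame_face (t, opposite t ` V) = t - V"
  by (simp add: frame_face_def facet_Int_opposites)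

lemma k_frames_iff:
  "(t, S) \<in> k_frames d \<Delta> k \<longleftrightarrow> t \<in> facets \<Delta> \<and> (\<exists>V\<subseteq>t. card V = k \<and> S = opposite t ` V)"
proof
  assume frame: "(t, S) \<in> k_frames d \<Delta> k"
  then have t: "t \<in> facets \<Delta>" and "card S = k" and adj: "\<forall>s\<in>S. fr_adjacent d \<Delta> t s"
    unfolding k_frames_def by auto
  define V where "V = {v \<in> t. opposite t v \<in> S}"
  have "S = opposite t ` V"
  proof
    show "S \<subseteq> opposite t ` V"
    proof
      fix s assume "s \<in> S"
      then obtain v where "v \<in> t" "s = opposite t v"
        using adj fr_adjacent_imp_opposite by metis
      then show "s \<in> opposite t ` V"
        using \<open>s \<in> S\<close> unfolding V_def by blast
    qed
  qed (auto simp: V_def)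
  moreover have "inj_on (opposite t) V"
    using inj_on_opposite[OF t] by (rule inj_on_subset) (auto simp: V_def)
  ultimately have "card V = k"
    using \<open>card S = k\<close> card_image by metis
  moreover have "V \<subseteq> t"
    by (simp add: V_def)
  ultimately show "t \<in> facets \<Delta> \<and> (\<exists>V\<subseteq>t. card V = k \<and> S = opposite t ` V)"
    using t \<open>S = opposite t ` V\<close> by blast
next
  assume "t \<in> facets \<Delta> \<and> (\<exists>V\<subseteq>t. card V = k \<and> S = opposite t ` V)"
  then obtain V where t: "t \<in> facets \<Delta>" and V: "V \<subseteq> t" "card V = k" "S = opposite t ` V"
    by blast
  have "card S = k"
    using V card_image inj_on_subset[OF inj_on_opposite[OF t] V(1)] by metis
  then show "(t, S) \<in> k_frames d \<Delta> k"
    using t V fr_adjacent_opposite unfolding k_frames_def by auto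
qed

lemma sink_iff_opposites_point_in:
  assumes orient: "is_orientation d \<Delta> Or" and t: "t \<in> facets \<Delta>" and V: "V \<subseteq> t"
  shows "is_sink_in Or (facets_containing \<Delta> (t - V)) t \<longleftrightarrow> (\<forall>v\<in>V. (opposite t v, t) \<in> Or)"
proof -
  have adj: "fr_adjacent d \<Delta> a b" if "(a, b) \<in> Or" for a b
    using orient that unfolding is_orientation_def by blast
  have anti: "(a, b) \<in> Or \<longleftrightarrow> (b, a) \<notin> Or" if "fr_adjacent d \<Delta> a b" for a b
    using orient that unfolding is_orientation_def by blast
  have out_neighbour: "(\<exists>u\<in>facets_containing \<Delta> (t - V). (t, u) \<in> Or) \<longleftrightarrow> (\<exists>v\<in>V. (t, opposite t v) \<in> Or)"
  proof
    assume "\<exists>u\<in>facets_containing \<Delta> (t - V). (t, u) \<in> Or"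
    then obtain u where u: "t - V \<subseteq> u" "(t, u) \<in> Or"
      unfolding facets_containing_def by blast
    then obtain w where "w \<in> t" "u = opposite t w"
      using adj fr_adjacent_imp_opposite by metis
    moreover have "w \<in> V"
      using calculation u(1) vertex_notin_opposite[OF t] by blast
    ultimately show "\<exists>v\<in>V. (t, opposite t v) \<in> Or"
      using u(2) by blast
  next
    assume "\<exists>v\<in>V. (t, opposite t v) \<in> Or"
    moreover have "opposite t v \<in> facets_containing \<Delta> (t - V)" if "v \<in> V" for v
      using opposite_facet[OF t] that V unfolding facets_containing_def by blast
    ultimately show "\<exists>u\<in>facets_containing \<Delta> (t - V). (t, u) \<in> Or"
      by blast
  qed
  have "t \<in> facets_containing \<Delta> (t - V)"
    using t unfolding facets_containing_def by blast
  then show ?thesis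
    unfolding is_sink_in_def out_neighbour
    using anti fr_adjacent_opposite[OF t] V by blast
qed

lemma in_frames_iff:
  assumes "is_orientation d \<Delta> Or"
  shows "(t, S) \<in> in_frames d \<Delta> Or k \<longleftrightarrow> t \<in> facets \<Delta> \<and>
    (\<exists>V\<subseteq>t. card V = k \<and> S = opposite t ` V \<and> is_sink_in Or (facets_containing \<Delta> (t - V)) t)"
  using sink_iff_opposites_point_in[OF assms] unfolding in_frames_def k_frames_iff by auto

lemma facet_diff_face:
  assumes "t \<in> facets \<Delta>" "V \<subseteq> t" "card V = k"
  shows "t - V \<in> \<Delta>" "card (t - V) = d - k"
  using assms downward_closed card_facet[OF assms(1)]
  by (auto simp: facets_def card_Diff_subset finite_subset)

definition sink_facet :: "('v set \<times> 'v set) set \<Rightarrow> 'v set \<Rightarrow> 'v set" where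
  "sink_facet Or \<sigma> = (THE t. is_sink_in Or (facets_containing \<Delta> \<sigma>) t)"

lemma is_sink_in_iff_sink_facet:
  assumes "good_orientation d \<Delta> Or" "\<sigma> \<in> \<Delta>" "card \<sigma> \<le> d"
  shows "is_sink_in Or (facets_containing \<Delta> \<sigma>) t \<longleftrightarrow> t = sink_facet Or \<sigma>"
proof -
  have "d - card \<sigma> \<le> d" "card \<sigma> = d - (d - card \<sigma>)"
    using assms(3) by auto
  then have "\<exists>!t. is_sink_in Or (facets_containing \<Delta> \<sigma>) t"
    using assms(1,2) unfolding good_orientation_def by blast
  then show ?thesis
    unfolding sink_facet_def using the1_equality theI' by metis
qed

lemma sink_facet:
  assumes "good_orientation d \<Delta> Or" "\<sigma> \<in> \<Delta>" "card \<sigma> \<le> d"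
  shows "sink_facet Or \<sigma> \<in> facets \<Delta>" "\<sigma> \<subseteq> sink_facet Or \<sigma>"
  using is_sink_in_iff_sink_facet[OF assms, of "sink_facet Or \<sigma>"]
  unfolding is_sink_in_def facets_containing_def by blast+

theorem bij_betw_in_frames_faces:
  assumes good: "good_orientation d \<Delta> Or" and "k \<le> d"
  shows "bij_betw frame_face (in_frames d \<Delta> Or k) {\<sigma> \<in> \<Delta>. card \<sigma> = d - k}"
proof -
  have orient: "is_orientation d \<Delta> Or"
    using good unfolding good_orientation_def by blast
  note sink = is_sink_in_iff_sink_facet[OF good] sink_facet[OF good]
  define frame_of where
    "frame_of \<sigma> = (sink_facet Or \<sigma>, opposite (sink_facet Or \<sigma>) ` (sink_facet Or \<sigma> - \<sigma>))" for \<sigma>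
  show ?thesis
  proof (rule bij_betw_byWitness[where f' = frame_of])
    show "\<forall>F\<in>in_frames d \<Delta> Or k. frame_of (frame_face F) = F"
    proof
      fix F assume "F \<in> in_frames d \<Delta> Or k"
      then obtain t V where t: "t \<in> facets \<Delta>" and V: "V \<subseteq> t" "card V = k"
        and F: "F = (t, opposite t ` V)" and "is_sink_in Or (facets_containing \<Delta> (t - V)) t"
        using in_frames_iff[OF orient] by (metis prod.collapse)
      then have "sink_facet Or (t - V) = t"
        using sink facet_diff_face[OF t V] by simp
      then show "frame_of (frame_face F) = F"
        using F V frame_face_opposites[OF t V(1)] unfolding frame_of_def by (simp add: double_diff)
    qed
    show "\<forall>\<sigma>\<in>{\<sigma> \<in> \<Delta>. card \<sigma> = d - k}. frame_face (frame_of \<sigma>) = \<sigma>"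
      using sink frame_face_opposites unfolding frame_of_def by (simp add: double_diff)
    show "frame_face ` in_frames d \<Delta> Or k \<subseteq> {\<sigma> \<in> \<Delta>. card \<sigma> = d - k}"
      using facet_diff_face frame_face_opposites in_frames_iff[OF orient] by force
    show "frame_of ` {\<sigma> \<in> \<Delta>. card \<sigma> = d - k} \<subseteq> in_frames d \<Delta> Or k"
    proof (rule image_subsetI)
      fix \<sigma> assume "\<sigma> \<in> {\<sigma> \<in> \<Delta>. card \<sigma> = d - k}"
      then have \<sigma>: "\<sigma> \<in> \<Delta>" "card \<sigma> \<le> d" "card \<sigma> = d - k"
        by auto
      have "card (sink_facet Or \<sigma> - \<sigma>) = k"
        using sink(2,3)[OF \<sigma>(1,2)] card_facet \<sigma>(3) \<open>k \<le> d\<close>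
        by (simp add: card_Diff_subset finite_subset)
      moreover have "is_sink_in Or (facets_containing \<Delta> (sink_facet Or \<sigma> - (sink_facet Or \<sigma> - \<sigma>)))
          (sink_facet Or \<sigma>)"
        using sink[OF \<sigma>(1,2)] by (simp add: double_diff)
      ultimately show "frame_of \<sigma> \<in> in_frames d \<Delta> Or k"
        using in_frames_iff[OF orient] sink(2)[OF \<sigma>(1,2)] unfolding frame_of_def by blast
    qed
  qed
qed

end

theorem proposition4p1:
  fixes \<Delta> :: "'v::finite set set"
    and Or :: "('v set \<times> 'v set) set"
    and d k :: nat
  assumes "d \<ge> 3"
    and "simplicial_complex \<Delta>"
    and "CARD('n::finite) = d"
    and "geometric_realization \<Delta> homeomorphic sphere (0 :: real ^ 'n) 1"
    and "\<forall>T\<in>facets \<Delta>. card T = d"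
    and "shellable d \<Delta>"
    and "good_orientation d \<Delta> Or"
    and "acyclic Or"
    and "k \<le> d"
  shows "bij_betw frame_face (in_frames d \<Delta> Or k) {\<sigma> \<in> \<Delta>. card \<sigma> = d - k}"
proof -
  have "weak_pseudomanifold d \<Delta>"
  proof (rule weak_pseudomanifold.intro)
    show "\<tau> \<in> \<Delta>" if "\<sigma> \<in> \<Delta>" "\<tau> \<subseteq> \<sigma>" for \<sigma> \<tau>
      using assms(2) that unfolding simplicial_complex_def by blast
    show "card T = d" if "T \<in> facets \<Delta>" for T
      using assms(5) that by blast
    show "\<exists>!T'. T' \<in> facets \<Delta> \<and> T' \<noteq> T \<and> T - {v} \<subseteq> T'" if "T \<in> facets \<Delta>" "v \<in> T" for T v
      using ex1_facet_opposite_vertex[OF assms(4) _ _ _ assms(5) that] assms(1,3) by simp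
  qed
  then show ?thesis
    using weak_pseudomanifold.bij_betw_in_frames_faces assms(7,9) by blast
qed

end
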